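(* For every $q\in\mathbf H^1_{\mathbb H}$, $$\sup_{\gamma\in PSL(2,\mathfrak L)}\Re(\gamma(q))<\infty\qquad\text{and}\qquad \sup_{\gamma\in PSL(2,\mathfrak H)}\Re(\gamma(q))<\infty.$$
   Context: $\mathbb H$ is the real quaternions, $\mathbf H^1_{\mathbb H}=\{q:\Re q>0\}$. Quaternionic matrices act by $q\mapsto(aq+b)(cq+d)^{-1}$. $\Im\mathbb H(\mathbb Z)=\{b\mathbf i+c\mathbf j+d\mathbf k:b,c,d\in\mathbb Z\}$, $\tau_\omega(q)=q+\omega$, $T(q)=q^{-1}$. $PSL(2,\mathfrak L)$ is the group generated by $T$ and the $\tau_\omega$, $\omega\in\Im\mathbb H(\mathbb Z)$. For a Hurwitz unit $u$ (one of the 24 quaternions $\pm1,\pm\mathbf i,\pm\mathbf j,\pm\mathbf k,\frac12(\pm1\pm\mathbf i\pm\mathbf j\pm\mathbf k)$), $D_u$ is the map $q\mapsto uqu^{-1}$ (matrix $\mathrm{diag}(u,u)$); $PSL(2,\mathfrak H)$ is the group generated by $T$, the $\tau_\omega$ and all $D_u$. All these elements are represented by matrices with Hurwitz-integer entries satisfying the (BG) conditions $\bar A^tKA=K$, $K=\begin{pmatrix}0&1\\1&0\end{pmatrix}$. *)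

theory Defs
  imports Complex_Main
begin

datatype quat = Quat (qre: real) (qi: real) (qj: real) (qk: real)

definition qzero :: quat where "qzero = Quat 0 0 0 0"
definition qone :: quat where "qone = Quat 1 0 0 0"

definition qadd :: "quat \<Rightarrow> quat \<Rightarrow> quat" where
  "qadd p q = Quat (qre p + qre q) (qi p + qi q) (qj p + qj q) (qk p + qk q)"

definition qneg :: "quat \<Rightarrow> quat" where
  "qneg p = Quat (- qre p) (- qi p) (- qj p) (- qk p)"

text \<open>Hamilton product (i^2 = j^2 = k^2 = ijk = -1).\<close>
definition qmult :: "quat \<Rightarrow> quat \<Rightarrow> quat" where
  "qmult p q = Quat
     (qre p * qre q - qi p * qi q - qj p * qj q - qk p * qk q)
     (qre p * qi q + qi p * qre q + qj p * qk q - qk p * qj q)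
     (qre p * qj q - qi p * qk q + qj p * qre q + qk p * qi q)
     (qre p * qk q + qi p * qj q - qj p * qi q + qk p * qre q)"

definition qnormsq :: "quat \<Rightarrow> real" where
  "qnormsq p = (qre p)\<^sup>2 + (qi p)\<^sup>2 + (qj p)\<^sup>2 + (qk p)\<^sup>2"

text \<open>Multiplicative inverse (conjugate over squared norm); the inverse of 0 is 0.\<close>
definition qinv :: "quat \<Rightarrow> quat" where
  "qinv p = Quat (qre p / qnormsq p) (- qi p / qnormsq p) (- qj p / qnormsq p) (- qk p / qnormsq p)"

text \<open>A 2x2 quaternionic matrix (a b; c d) is represented as the tuple (a, b, c, d).\<close>
type_synonym qmat = "quat \<times> quat \<times> quat \<times> quat"

definition qmat_mult :: "qmat \<Rightarrow> qmat \<Rightarrow> qmat" where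
  "qmat_mult M N = (case M of (a, b, c, d) \<Rightarrow> case N of (a', b', c', d') \<Rightarrow>
     (qadd (qmult a a') (qmult b c'), qadd (qmult a b') (qmult b d'),
      qadd (qmult c a') (qmult d c'), qadd (qmult c b') (qmult d d')))"

definition qmat_id :: qmat where "qmat_id = (qone, qzero, qzero, qone)"

definition mobius :: "qmat \<Rightarrow> quat \<Rightarrow> quat" where
  "mobius M q = (case M of (a, b, c, d) \<Rightarrow>
     qmult (qadd (qmult a q) b) (qinv (qadd (qmult c q) d)))"

definition H1 :: "quat set" where "H1 = {q. qre q > 0}"

definition ImHZ :: "quat set" where
  "ImHZ = {Quat 0 (of_int b) (of_int c) (of_int d) | b c d. True}"

definition hurwitz_units :: "quat set" where
  "hurwitz_units =
     {Quat 1 0 0 0, Quat (-1) 0 0 0, Quat 0 1 0 0, Quat 0 (-1) 0 0,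
      Quat 0 0 1 0, Quat 0 0 (-1) 0, Quat 0 0 0 1, Quat 0 0 0 (-1)}
   \<union> {Quat (s1 / 2) (s2 / 2) (s3 / 2) (s4 / 2) | s1 s2 s3 s4.
        s1 \<in> {1, -1} \<and> s2 \<in> {1, -1} \<and> s3 \<in> {1, -1} \<and> s4 \<in> {1, -1}}"

definition T_mat :: qmat where "T_mat = (qzero, qone, qone, qzero)"
definition tau_mat :: "quat \<Rightarrow> qmat" where "tau_mat w = (qone, w, qzero, qone)"
definition D_mat :: "quat \<Rightarrow> qmat" where "D_mat u = (u, qzero, qzero, u)"

text \<open>PSL(2,L): generated by T and tau_w, w in ImHZ.  Each generator's inverse is
  again a generator (T^2 = 1, tau_w^{-1} = tau_{-w}), so the generated monoid is the
  generated group.\<close>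
inductive_set PSL2_L :: "qmat set" where
  L_id: "qmat_id \<in> PSL2_L"
| L_T: "g \<in> PSL2_L \<Longrightarrow> qmat_mult T_mat g \<in> PSL2_L"
| L_tau: "w \<in> ImHZ \<Longrightarrow> g \<in> PSL2_L \<Longrightarrow> qmat_mult (tau_mat w) g \<in> PSL2_L"

text \<open>PSL(2,H): generated by T, the tau_w and all D_u, u a Hurwitz unit
  (D_u^{-1} = D_{u^{-1}} with u^{-1} again a Hurwitz unit).\<close>
inductive_set PSL2_H :: "qmat set" where
  H_id: "qmat_id \<in> PSL2_H"
| H_T: "g \<in> PSL2_H \<Longrightarrow> qmat_mult T_mat g \<in> PSL2_H"
| H_tau: "w \<in> ImHZ \<Longrightarrow> g \<in> PSL2_H \<Longrightarrow> qmat_mult (tau_mat w) g \<in> PSL2_H"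
| H_D: "u \<in> hurwitz_units \<Longrightarrow> g \<in> PSL2_H \<Longrightarrow> qmat_mult (D_mat u) g \<in> PSL2_H"

end

theory Submission
  imports Defs
begin

text \<open>Every element of PSL(2,H) is a matrix (a b; c d) with Hurwitz-integer entries satisfying the
  (BG) conditions, since the generators have both properties and both are stable under products.
  For such a matrix the (BG) conditions give Re(\<gamma> q) = Re q / |c q + d|^2, and
  |c q + d|^2 \<ge> (Re q)^2 |c|^2 because Re(c^* d) = 0.  Nonzero Hurwitz integers have norm at
  least 1, so Re(\<gamma> q) \<le> 1 / Re q if c \<noteq> 0, and Re(\<gamma> q) \<le> Re q if c = 0 (then d \<noteq> 0).
  Finally PSL(2,L) \<subseteq> PSL(2,H).\<close>

lemma quat_eq_iff: "p = q \<longleftrightarrow> qre p = qre q \<and> qi p = qi q \<and> qj p = qj q \<and> qk p = qk q"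
  by (cases p; cases q) auto

lemma qmult_assoc: "qmult (qmult p q) r = qmult p (qmult q r)"
  by (simp add: quat_eq_iff qmult_def algebra_simps)

lemma qmult_qadd_distrib_left: "qmult p (qadd q r) = qadd (qmult p q) (qmult p r)"
  by (simp add: quat_eq_iff qmult_def qadd_def algebra_simps)

lemma qmult_qadd_distrib_right: "qmult (qadd p q) r = qadd (qmult p r) (qmult q r)"
  by (simp add: quat_eq_iff qmult_def qadd_def algebra_simps)

lemma qadd_assoc: "qadd (qadd p q) r = qadd p (qadd q r)"
  by (simp add: qadd_def)
lemma qadd_commute: "qadd p q = qadd q p"
  by (simp add: qadd_def add.commute)
lemma qadd_left_commute: "qadd p (qadd q r) = qadd q (qadd p r)"
  by (simp add: qadd_def add.left_commute)

definition qconj :: "quat \<Rightarrow> quat" where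
  "qconj p = Quat (qre p) (- qi p) (- qj p) (- qk p)"

lemma qconj_qmult: "qconj (qmult p q) = qmult (qconj q) (qconj p)"
  by (simp add: quat_eq_iff qconj_def qmult_def algebra_simps)
lemma qconj_qadd: "qconj (qadd p q) = qadd (qconj p) (qconj q)"
  by (simp add: quat_eq_iff qconj_def qadd_def)

definition qdot :: "quat \<Rightarrow> quat \<Rightarrow> real" where
  "qdot x y = qre x * qre y + qi x * qi y + qj x * qj y + qk x * qk y"

text \<open>Hurwitz integers, in coordinates for the \<int>-basis (1 + i + j + k)/2, i, j, k.\<close>

definition hurwitz :: "quat \<Rightarrow> bool" where
  "hurwitz p \<longleftrightarrow> (\<exists>a b c d :: int.
     p = Quat (of_int a / 2) (of_int b + of_int a / 2) (of_int c + of_int a / 2) (of_int d + of_int a / 2))"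

lemma hurwitz_qadd:
  assumes "hurwitz p" "hurwitz q" shows "hurwitz (qadd p q)"
proof -
  obtain a b c d :: int where p: "p = Quat (a / 2) (b + a / 2) (c + a / 2) (d + a / 2)"
    using assms(1) unfolding hurwitz_def by blast
  obtain e f g h :: int where q: "q = Quat (e / 2) (f + e / 2) (g + e / 2) (h + e / 2)"
    using assms(2) unfolding hurwitz_def by blast
  show ?thesis unfolding hurwitz_def p q
    by (intro exI[of _ "a + e"] exI[of _ "b + f"] exI[of _ "c + g"] exI[of _ "d + h"])
       (simp add: qadd_def field_simps)
qed

lemma hurwitz_qmult:
  assumes "hurwitz p" "hurwitz q" shows "hurwitz (qmult p q)"
proof -
  obtain a b c d :: int where p: "p = Quat (a / 2) (b + a / 2) (c + a / 2) (d + a / 2)"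
    using assms(1) unfolding hurwitz_def by blast
  obtain e f g h :: int where q: "q = Quat (e / 2) (f + e / 2) (g + e / 2) (h + e / 2)"
    using assms(2) unfolding hurwitz_def by blast
  define s where "s = - a*e - a*f - a*g - a*h - b*e - 2*b*f - c*e - 2*c*g - d*e - 2*d*h"
  show ?thesis unfolding hurwitz_def p q
    by (intro exI[of _ s] exI[of _ "a*e + a*f + a*h + b*e + b*f + c*e + c*g + c*h - d*g + d*h"]
          exI[of _ "a*e + a*f + a*g + b*f - b*h + c*e + c*g + d*e + d*f + d*h"]
          exI[of _ "a*e + a*g + a*h + b*e + b*f + b*g - c*f + c*g + d*e + d*h"])
       (simp add: s_def quat_eq_iff qmult_def field_simps)
qed

lemma hurwitz_halvesI:
  fixes a b c d :: int
  assumes "even (b - a)" "even (c - a)" "even (d - a)"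
  shows "hurwitz (Quat (a / 2) (b / 2) (c / 2) (d / 2))"
proof -
  have half: "real_of_int ((m - a) div 2) = m / 2 - a / 2" if "even (m - a)" for m
    using that by (simp add: real_of_int_div diff_divide_distrib)
  show ?thesis
    unfolding hurwitz_def
    by (intro exI[of _ a] exI[of _ "(b - a) div 2"] exI[of _ "(c - a) div 2"] exI[of _ "(d - a) div 2"])
       (simp only: half assms, simp)
qed

lemma qnormsq_hurwitz_Ints:
  assumes "hurwitz p" shows "qnormsq p \<in> \<int>"
proof -
  obtain a b c d :: int where p: "p = Quat (a / 2) (b + a / 2) (c + a / 2) (d + a / 2)"
    using assms unfolding hurwitz_def by blast
  have "qnormsq p = of_int (a\<^sup>2 + a * (b + c + d) + b\<^sup>2 + c\<^sup>2 + d\<^sup>2)"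
    by (simp add: p qnormsq_def power2_eq_square field_simps)
  then show ?thesis by simp
qed

lemma qnormsq_eq_0_iff: "qnormsq p = 0 \<longleftrightarrow> p = qzero"
  by (cases p) (simp add: qnormsq_def qzero_def add_nonneg_eq_0_iff)

lemma qnormsq_hurwitz_ge_1:
  assumes "hurwitz p" "p \<noteq> qzero" shows "1 \<le> qnormsq p"
proof -
  obtain n :: int where n: "qnormsq p = of_int n"
    using qnormsq_hurwitz_Ints[OF assms(1)] by (rule Ints_cases)
  have "0 \<le> qnormsq p" by (simp add: qnormsq_def)
  moreover have "qnormsq p \<noteq> 0" using assms(2) qnormsq_eq_0_iff by blast
  ultimately show ?thesis unfolding n by simp
qed

lemma hurwitz_units_hurwitz_normsq:
  assumes "u \<in> hurwitz_units" shows "hurwitz u \<and> qnormsq u = 1"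
proof -
  \<comment> \<open>the coordinates of a unit are half-integers of equal parity, recovered as \<open>\<lfloor>2x\<rfloor> / 2\<close>\<close>
  define m :: "(quat \<Rightarrow> real) \<Rightarrow> int" where "m f = \<lfloor>2 * f u\<rfloor>" for f
  have u: "u = Quat (m qre / 2) (m qi / 2) (m qj / 2) (m qk / 2)"
    and parity: "even (m qi - m qre)" "even (m qj - m qre)" "even (m qk - m qre)"
    using assms by (auto simp: hurwitz_units_def m_def floor_minus)
  moreover have "qnormsq u = 1" using assms by (auto simp: hurwitz_units_def qnormsq_def power_divide)
  ultimately show ?thesis using hurwitz_halvesI by metis
qed

lemma hurwitz_qzero: "hurwitz qzero"
  using hurwitz_halvesI[where a = 0 and b = 0 and c = 0 and d = 0] by (simp add: qzero_def)

lemma hurwitz_qone: "hurwitz qone"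
  using hurwitz_halvesI[where a = 2 and b = 0 and c = 0 and d = 0] by (simp add: qone_def)

lemma hurwitz_ImHZ:
  assumes "w \<in> ImHZ" shows "hurwitz w"
proof -
  obtain b c d :: int where "w = Quat 0 b c d" using assms by (auto simp: ImHZ_def)
  then show ?thesis
    using hurwitz_halvesI[where a = 0 and b = "2 * b" and c = "2 * c" and d = "2 * d"] by simp
qed

lemma qmat_mult_assoc: "qmat_mult (qmat_mult L M) N = qmat_mult L (qmat_mult M N)"
  by (simp add: qmat_mult_def split: prod.split)
     (simp add: qmult_qadd_distrib_left qmult_qadd_distrib_right qmult_assoc qadd_assoc qadd_left_commute)

definition qmat_adj :: "qmat \<Rightarrow> qmat" where
  "qmat_adj M = (case M of (a, b, c, d) \<Rightarrow> (qconj a, qconj c, qconj b, qconj d))"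

lemma qmat_adj_mult: "qmat_adj (qmat_mult M N) = qmat_mult (qmat_adj N) (qmat_adj M)"
  by (simp add: qmat_adj_def qmat_mult_def qconj_qmult qconj_qadd qadd_commute split: prod.split)

text \<open>The (BG) conditions \<open>A^* K A = K\<close> and \<open>A K A^* = K\<close>, where \<open>K = T_mat\<close>.  The second
  follows from the first (it says that \<open>K A^* K\<close> is also a right inverse of \<open>A\<close>), but
  it is easier to carry both through the induction than to derive it.\<close>

definition bg_matrix :: "qmat \<Rightarrow> bool" where
  "bg_matrix M \<longleftrightarrow> qmat_mult (qmat_adj M) (qmat_mult T_mat M) = T_mat
                  \<and> qmat_mult M (qmat_mult T_mat (qmat_adj M)) = T_mat"

lemma bg_matrix_mult:
  assumes "bg_matrix L" "bg_matrix M" shows "bg_matrix (qmat_mult L M)"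
  using assms unfolding bg_matrix_def qmat_adj_mult qmat_mult_assoc
  by (metis qmat_mult_assoc)

lemma bg_matrix_qmat_id: "bg_matrix qmat_id"
  by (simp add: bg_matrix_def qmat_id_def T_mat_def qmat_adj_def qmat_mult_def qconj_def qmult_def qadd_def qone_def qzero_def)

lemma bg_matrix_T: "bg_matrix T_mat"
  by (simp add: bg_matrix_def T_mat_def qmat_adj_def qmat_mult_def qconj_def qmult_def qadd_def qone_def qzero_def)

lemma bg_matrix_tau: "qre w = 0 \<Longrightarrow> bg_matrix (tau_mat w)"
  by (simp add: bg_matrix_def tau_mat_def T_mat_def qmat_adj_def qmat_mult_def qconj_def qmult_def qadd_def qone_def qzero_def)

lemma bg_matrix_D: "qnormsq u = 1 \<Longrightarrow> bg_matrix (D_mat u)"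
  by (cases u) (simp add: bg_matrix_def D_mat_def T_mat_def qmat_adj_def qmat_mult_def qconj_def qmult_def qadd_def qone_def qzero_def qnormsq_def power2_eq_square algebra_simps)

lemma bg_matrixD:
  assumes "bg_matrix (a, b, c, d)"
  shows "qdot a c = 0" "qdot b d = 0" "qadd (qmult (qconj a) d) (qmult (qconj c) b) = qone" "qdot c d = 0"
  using assms
  by (auto simp add: bg_matrix_def T_mat_def qmat_adj_def qmat_mult_def qconj_def qmult_def qadd_def qone_def qzero_def qdot_def)

lemma qre_mobius:
  "qre (mobius (a, b, c, d) q)
     = qdot (qadd (qmult a q) b) (qadd (qmult c q) d) / qnormsq (qadd (qmult c q) d)"
  by (simp add: mobius_def qmult_def qinv_def qdot_def add_divide_distrib diff_divide_distrib algebra_simps)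

lemma qre_mobius_bg_matrix:
  assumes "bg_matrix (a, b, c, d)"
  shows "qre (mobius (a, b, c, d) q) = qre q / qnormsq (qadd (qmult c q) d)"
proof -
  have "qdot (qadd (qmult a q) b) (qadd (qmult c q) d)
      = qnormsq q * qdot a c + qdot b d + qdot (qadd (qmult (qconj a) d) (qmult (qconj c) b)) q"
    by (cases a; cases b; cases c; cases d; cases q)
       (simp add: qdot_def qnormsq_def qadd_def qmult_def qconj_def power2_eq_square algebra_simps)
  then show ?thesis using bg_matrixD[OF assms] by (simp add: qre_mobius qdot_def qone_def)
qed

lemma qnormsq_qmult_qadd_ge:
  assumes "qdot c d = 0"
  shows "(qre q)\<^sup>2 * qnormsq c \<le> qnormsq (qadd (qmult c q) d)"
proof -
  \<comment> \<open>split \<open>q = Re q + y\<close>; the cross term \<open>Re (c^* c y) = |c|^2 Re y\<close> vanishes\<close>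
  define y where "y = Quat 0 (qi q) (qj q) (qk q)"
  have "qnormsq (qadd (qmult c q) d)
      = (qre q)\<^sup>2 * qnormsq c + qnormsq (qadd (qmult c y) d) + 2 * qre q * qdot c d"
    unfolding y_def
    by (cases c; cases d; cases q) (simp add: qdot_def qnormsq_def qadd_def qmult_def power2_eq_square algebra_simps)
  moreover have "0 \<le> qnormsq (qadd (qmult c y) d)" by (simp add: qnormsq_def)
  ultimately show ?thesis using assms by simp
qed

lemma qre_mobius_bg_matrix_le:
  assumes bg: "bg_matrix (a, b, c, d)" and "hurwitz c" "hurwitz d" and x: "0 < qre q"
  shows "qre (mobius (a, b, c, d) q) \<le> 1 / qre q + qre q"
proof -
  let ?r = "qadd (qmult c q) d"
  note re = qre_mobius_bg_matrix[OF bg]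
  show ?thesis
  proof (cases "c = qzero")
    case False
    have x2: "0 < (qre q)\<^sup>2" using x by simp
    have "(qre q)\<^sup>2 \<le> (qre q)\<^sup>2 * qnormsq c"
      using mult_left_mono[OF qnormsq_hurwitz_ge_1[OF \<open>hurwitz c\<close> False], of "(qre q)\<^sup>2"] by simp
    also have "\<dots> \<le> qnormsq ?r"
      using qnormsq_qmult_qadd_ge bg_matrixD(4)[OF bg] .
    finally have "(qre q)\<^sup>2 \<le> qnormsq ?r" .
    then have "qre q / qnormsq ?r \<le> qre q / (qre q)\<^sup>2"
      using x x2 by (intro divide_left_mono mult_pos_pos) linarith+
    then show ?thesis using x by (simp add: re power2_eq_square)
  next
    case True
    then have "d \<noteq> qzero"
      using bg_matrixD(3)[OF bg] by (auto simp: qmult_def qadd_def qconj_def qzero_def qone_def)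
    moreover have "?r = d"
      using True by (cases d) (simp add: qmult_def qadd_def qzero_def)
    ultimately have "1 \<le> qnormsq ?r" using qnormsq_hurwitz_ge_1[OF \<open>hurwitz d\<close>] by simp
    then have "qre q / qnormsq ?r \<le> qre q"
      using x by (simp add: divide_le_eq_1 divide_le_eq mult_le_cancel_left1)
    then show ?thesis using x by (simp add: re add_increasing)
  qed
qed

definition hurwitz_matrix :: "qmat \<Rightarrow> bool" where
  "hurwitz_matrix M \<longleftrightarrow> (case M of (a, b, c, d) \<Rightarrow> hurwitz a \<and> hurwitz b \<and> hurwitz c \<and> hurwitz d)"

lemma hurwitz_matrix_mult:
  "hurwitz_matrix L \<Longrightarrow> hurwitz_matrix M \<Longrightarrow> hurwitz_matrix (qmat_mult L M)"
  by (auto simp: hurwitz_matrix_def qmat_mult_def hurwitz_qadd hurwitz_qmult split: prod.splits)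

lemma PSL2_H_hurwitz_bg_matrix: "g \<in> PSL2_H \<Longrightarrow> hurwitz_matrix g \<and> bg_matrix g"
proof (induction rule: PSL2_H.induct)
  case H_id
  show ?case
    using bg_matrix_qmat_id by (simp add: hurwitz_matrix_def qmat_id_def hurwitz_qzero hurwitz_qone)
next
  case (H_T g)
  have "hurwitz_matrix T_mat"
    by (simp add: hurwitz_matrix_def T_mat_def hurwitz_qzero hurwitz_qone)
  then show ?case using H_T bg_matrix_T hurwitz_matrix_mult bg_matrix_mult by blast
next
  case (H_tau w g)
  have "hurwitz_matrix (tau_mat w)"
    using hurwitz_ImHZ[OF H_tau(1)] by (simp add: hurwitz_matrix_def tau_mat_def hurwitz_qzero hurwitz_qone)
  moreover have "bg_matrix (tau_mat w)"
    using H_tau(1) by (intro bg_matrix_tau) (auto simp: ImHZ_def)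
  ultimately show ?case using H_tau hurwitz_matrix_mult bg_matrix_mult by blast
next
  case (H_D u g)
  have u: "hurwitz u" "qnormsq u = 1" using hurwitz_units_hurwitz_normsq[OF H_D(1)] by auto
  then have "hurwitz_matrix (D_mat u)" "bg_matrix (D_mat u)"
    by (simp add: hurwitz_matrix_def D_mat_def hurwitz_qzero) (rule bg_matrix_D[OF u(2)])
  then show ?case using H_D hurwitz_matrix_mult bg_matrix_mult by blast
qed

lemma PSL2_L_subset_PSL2_H: "PSL2_L \<subseteq> PSL2_H"
proof
  show "g \<in> PSL2_H" if "g \<in> PSL2_L" for g
    using that by induction (auto intro: PSL2_H.intros)
qed

theorem corollary6p2:
  fixes q :: quat
  assumes "q \<in> H1"
  shows "bdd_above ((\<lambda>g. qre (mobius g q)) ` PSL2_L)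
       \<and> bdd_above ((\<lambda>g. qre (mobius g q)) ` PSL2_H)"
proof -
  have x: "0 < qre q" using assms by (simp add: H1_def)
  have bound: "qre (mobius g q) \<le> 1 / qre q + qre q" if "g \<in> PSL2_H" for g
    using PSL2_H_hurwitz_bg_matrix[OF that] qre_mobius_bg_matrix_le[OF _ _ _ x]
    by (cases g) (auto simp: hurwitz_matrix_def)
  then have "bdd_above ((\<lambda>g. qre (mobius g q)) ` PSL2_H)"
    by (rule bdd_aboveI2)
  moreover have "bdd_above ((\<lambda>g. qre (mobius g q)) ` PSL2_L)"
    using bound PSL2_L_subset_PSL2_H by (intro bdd_aboveI2) blast
  ultimately show ?thesis by blast
qed

end
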